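(* Let $\mathcal{G}^{c}=(\mathbb{C},\mathbb{E}^{c})$ be a C-DMG over DMGs and let $\mathbb{C}_X,\mathbb{C}_Y,\mathbb{C}_W$ be pairwise disjoint subsets of $\mathbb{C}$. If $\mathbb{C}_X$ and $\mathbb{C}_Y$ are $\sigma$-separated by $\mathbb{C}_W$ in $\mathcal{G}^{c}$, then in every DMG $\mathcal{G}=(\mathbb{V},\mathbb{E})$ compatible with $\mathcal{G}^{c}$, the sets $X=\bigcup_{C\in\mathbb{C}_X}C$ and $Y=\bigcup_{C\in\mathbb{C}_Y}C$ are $\sigma$-separated by $W=\bigcup_{C\in\mathbb{C}_W}C$.
   Context: A directed mixed graph (DMG) $\mathcal{G}=(\mathbb{V},\mathbb{E})$ has directed edges $\to$ and bidirected edges $\leftrightarrow$, cycles allowed; the DMGs considered are those induced by input/output structural causal models (ioSCMs, Forré–Mooij 2020): vertices are the endogenous and input variables, $U\to V$ if $U$ is an argument of the causal mechanism of $V$, and $U\leftrightarrow V$ if some latent variable is a parent of both. A C-DMG over DMGs $\mathcal{G}^c=(\mathbb{C},\mathbb{E}^c)$ is obtained from such a DMG $\mathcal{G}=(\mathbb{V},\mathbb{E})$ as follows: $\mathbb{C}$ is a partition of $\mathbb{V}$ into nonempty clusters, and for all $C_i,C_j\in\mathbb{C}$ (possibly equal) the edge $C_i\to C_j$ (resp. $C_i\leftrightarrow C_j$) is in $\mathbb{E}^c$ iff there exist $V_i\in C_i,V_j\in C_j$ with $V_i\to V_j$ (resp. $V_i\leftrightarrow V_j$) in $\mathbb{E}$;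 such $\mathcal{G}$ is called compatible with $\mathcal{G}^c$. In any such graph, ancestors and descendants include the vertex itself, and the strongly connected component of $V$ is $\mathrm{Sc}(V)=\mathrm{Anc}(V)\cap\mathrm{Desc}(V)$. Write $A\mathbin{*\!\!\to} B$ for an edge $A\to B$ or $A\leftrightarrow B$, and $A\mathbin{\leftarrow\!\!*} B$ for $A\leftarrow B$ or $A\leftrightarrow B$. A walk $\langle V_1,\dots,V_n\rangle$ (a sequence of vertices with consecutive vertices joined by a specified edge) is $\sigma$-blocked by a set $W$ if: (1) $V_1\in W$ or $V_n\in W$; or (2) for some $1<i<n$, $V_{i-1}\mathbin{*\!\!\to}V_i\mathbin{\leftarrow\!\!*}V_{i+1}$ on the walk and $V_i\notin W$; or (3) for some $1<i<n$, $V_{i-1}\leftarrow V_i\mathbin{\leftarrow\!\!*}V_{i+1}$ on the walk and $V_i\in W\setminus \mathrm{Sc}(V_{i-1})$; or (4) for some $1<i<n$, $V_{i-1}\mathbin{*\!\!\to}V_i\to V_{i+1}$ on the walk and $V_i\in W\setminus\mathrm{Sc}(V_{i+1})$; or (5) for some $1<i<n$, $V_{i-1}\leftarrow V_i\to V_{i+1}$ on the walk and $V_i\in W\setminus(\mathrm{Sc}(V_{i-1})\cap\mathrm{Sc}(V_{i+1}))$. For disjoint vertex sets $X,Y,W$, $W$ $\sigma$-separates $X$ and $Y$ if every walk from a vertex of $X$ to a vertex of $Y$ is $\sigma$-blocked by $W$. These notions apply to both DMGs and C-DMGs. *)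

theory Defs
  imports Main
begin

text \<open>A mixed graph: vertex set, directed edges (a,b) meaning a \<rightarrow> b,
  bidirected edges (stored symmetrically). Used both for DMGs (vertices of type 'v)
  and for C-DMGs (vertices = clusters, of type 'v set).\<close>
record 'v mgraph =
  verts :: "'v set"
  dir   :: "('v \<times> 'v) set"
  bi    :: "('v \<times> 'v) set"

definition wf_mgraph :: "'v mgraph \<Rightarrow> bool" where
  "wf_mgraph G \<longleftrightarrow> finite (verts G) \<and> dir G \<subseteq> verts G \<times> verts G
     \<and> bi G \<subseteq> verts G \<times> verts G \<and> sym (bi G)"

datatype ekind = Fwd | Bwd | Bi

fun has_edge :: "'v mgraph \<Rightarrow> 'v \<Rightarrow> ekind \<Rightarrow> 'v \<Rightarrow> bool" where
  "has_edge G a Fwd b = ((a, b) \<in> dir G)"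
| "has_edge G a Bwd b = ((b, a) \<in> dir G)"
| "has_edge G a Bi b = ((a, b) \<in> bi G)"

definition is_walk :: "'v mgraph \<Rightarrow> 'v list \<Rightarrow> ekind list \<Rightarrow> bool" where
  "is_walk G vs es \<longleftrightarrow> vs \<noteq> [] \<and> set vs \<subseteq> verts G \<and> length es = length vs - 1
     \<and> (\<forall>i < length es. has_edge G (vs ! i) (es ! i) (vs ! Suc i))"

definition anc :: "'v mgraph \<Rightarrow> 'v \<Rightarrow> 'v set" where
  "anc G v = {u. (u, v) \<in> (dir G)\<^sup>*}"

definition desc :: "'v mgraph \<Rightarrow> 'v \<Rightarrow> 'v set" where
  "desc G v = {u. (v, u) \<in> (dir G)\<^sup>*}"

definition Sc :: "'v mgraph \<Rightarrow> 'v \<Rightarrow> 'v set" where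
  "Sc G v = anc G v \<inter> desc G v"

text \<open>Arrowhead at vs!i from the left iff e1 \<noteq> Bwd; from the right iff e2 \<noteq> Fwd.\<close>
definition sigma_blocked :: "'v mgraph \<Rightarrow> 'v list \<Rightarrow> ekind list \<Rightarrow> 'v set \<Rightarrow> bool" where
  "sigma_blocked G vs es W \<longleftrightarrow>
     hd vs \<in> W \<or> last vs \<in> W \<or>
     (\<exists>i. 0 < i \<and> i < length vs - 1 \<and>
        (let e1 = es ! (i - 1); e2 = es ! i;
             p = vs ! (i - 1); v = vs ! i; q = vs ! Suc i in
          (e1 \<noteq> Bwd \<and> e2 \<noteq> Fwd \<and> v \<notin> W) \<or>
          (e1 = Bwd \<and> e2 \<noteq> Fwd \<and> v \<in> W - Sc G p) \<or>
          (e1 \<noteq> Bwd \<and> e2 = Fwd \<and> v \<in> W - Sc G q) \<or>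
          (e1 = Bwd \<and> e2 = Fwd \<and> v \<in> W - (Sc G p \<inter> Sc G q))))"

definition sigma_sep :: "'v mgraph \<Rightarrow> 'v set \<Rightarrow> 'v set \<Rightarrow> 'v set \<Rightarrow> bool" where
  "sigma_sep G X Y W \<longleftrightarrow>
     (\<forall>vs es. is_walk G vs es \<and> hd vs \<in> X \<and> last vs \<in> Y \<longrightarrow> sigma_blocked G vs es W)"

definition is_partition :: "'v set set \<Rightarrow> 'v set \<Rightarrow> bool" where
  "is_partition P V \<longleftrightarrow> (\<forall>C\<in>P. C \<noteq> {}) \<and> \<Union>P = V
     \<and> (\<forall>C1\<in>P. \<forall>C2\<in>P. C1 \<noteq> C2 \<longrightarrow> C1 \<inter> C2 = {})"

definition compatible :: "'v mgraph \<Rightarrow> 'v set mgraph \<Rightarrow> bool" where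
  "compatible G Gc \<longleftrightarrow> wf_mgraph G \<and> is_partition (verts Gc) (verts G)
     \<and> dir Gc = {(Ci, Cj). Ci \<in> verts Gc \<and> Cj \<in> verts Gc \<and> (\<exists>a\<in>Ci. \<exists>b\<in>Cj. (a, b) \<in> dir G)}
     \<and> bi Gc = {(Ci, Cj). Ci \<in> verts Gc \<and> Cj \<in> verts Gc \<and> (\<exists>a\<in>Ci. \<exists>b\<in>Cj. (a, b) \<in> bi G)}"

end

theory Submission
  imports Defs
begin

text \<open>Sending every vertex of a compatible DMG to its cluster is a homomorphism of mixed graphs
  onto the C-DMG. A homomorphism maps walks to walks with the same edge kinds and maps strongly
  connected components into strongly connected components, so a blocking condition that holds for
  the image walk at some position also holds for the original walk, as long as the homomorphism
  reflects membership in the conditioning set; the cluster map does so for a union of clusters.\<close>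

definition mgraph_hom :: "'a mgraph \<Rightarrow> 'b mgraph \<Rightarrow> ('a \<Rightarrow> 'b) \<Rightarrow> bool" where
  "mgraph_hom G H f \<longleftrightarrow> f ` verts G \<subseteq> verts H
     \<and> (\<forall>(a, b) \<in> dir G. (f a, f b) \<in> dir H) \<and> (\<forall>(a, b) \<in> bi G. (f a, f b) \<in> bi H)"

lemma has_edge_hom:
  assumes "mgraph_hom G H f" and "has_edge G a e b"
  shows "has_edge H (f a) e (f b)"
  using assms by (cases e) (auto simp: mgraph_hom_def)

lemma is_walk_hom:
  assumes "mgraph_hom G H f" and "is_walk G vs es"
  shows "is_walk H (map f vs) es"
proof -
  have "f ` verts G \<subseteq> verts H" using assms(1) unfolding mgraph_hom_def by blast
  then show ?thesis using assms(2) has_edge_hom[OF assms(1)] unfolding is_walk_def by fastforce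
qed

lemma rtrancl_dir_hom:
  assumes "mgraph_hom G H f" and "(a, b) \<in> (dir G)\<^sup>*"
  shows "(f a, f b) \<in> (dir H)\<^sup>*"
  using assms(2)
proof (induction rule: rtrancl_induct)
  case (step b c)
  then have "(f b, f c) \<in> dir H" using assms(1) unfolding mgraph_hom_def by blast
  with step.IH show ?case by simp
qed simp

lemma Sc_hom:
  assumes "mgraph_hom G H f" and "u \<in> Sc G v"
  shows "f u \<in> Sc H (f v)"
  using assms rtrancl_dir_hom[OF assms(1)] unfolding Sc_def anc_def desc_def by blast

lemma sigma_blocked_hom:
  assumes hom: "mgraph_hom G H f" and "set vs \<subseteq> verts G" and "vs \<noteq> []"
    and W: "\<And>v. v \<in> verts G \<Longrightarrow> v \<in> W \<longleftrightarrow> f v \<in> W'"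
    and blocked: "sigma_blocked H (map f vs) es W'"
  shows "sigma_blocked G vs es W"
proof -
  have in_W: "\<And>i. i < length vs \<Longrightarrow> vs ! i \<in> W \<longleftrightarrow> f (vs ! i) \<in> W'"
    using W assms(2) nth_mem by blast
  have not_Sc: "\<And>u v. f u \<notin> Sc H (f v) \<Longrightarrow> u \<notin> Sc G v"
    using Sc_hom[OF hom] by blast
  from blocked consider "hd (map f vs) \<in> W'" | "last (map f vs) \<in> W'"
    | i where "0 < i" "i < length vs - 1"
      "(es ! (i - 1) \<noteq> Bwd \<and> es ! i \<noteq> Fwd \<and> f (vs ! i) \<notin> W') \<or>
       (es ! (i - 1) = Bwd \<and> es ! i \<noteq> Fwd \<and> f (vs ! i) \<in> W' - Sc H (f (vs ! (i - 1)))) \<or>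
       (es ! (i - 1) \<noteq> Bwd \<and> es ! i = Fwd \<and> f (vs ! i) \<in> W' - Sc H (f (vs ! Suc i))) \<or>
       (es ! (i - 1) = Bwd \<and> es ! i = Fwd \<and>
          f (vs ! i) \<in> W' - (Sc H (f (vs ! (i - 1))) \<inter> Sc H (f (vs ! Suc i))))"
    unfolding sigma_blocked_def Let_def by auto
  then show ?thesis
  proof cases
    case 1
    then show ?thesis using in_W[of 0] \<open>vs \<noteq> []\<close>
      by (simp add: sigma_blocked_def hd_map hd_conv_nth)
  next
    case 2
    then show ?thesis using in_W[of "length vs - 1"] \<open>vs \<noteq> []\<close>
      by (simp add: sigma_blocked_def last_map last_conv_nth)
  next
    case (3 i)
    let ?u = "vs ! (i - 1)" and ?v = "vs ! i" and ?w = "vs ! Suc i"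
    have "?v \<in> W \<longleftrightarrow> f ?v \<in> W'" using in_W 3(2) by simp
    with 3(3) not_Sc[of ?v ?u] not_Sc[of ?v ?w] have
      "(es ! (i - 1) \<noteq> Bwd \<and> es ! i \<noteq> Fwd \<and> ?v \<notin> W) \<or>
       (es ! (i - 1) = Bwd \<and> es ! i \<noteq> Fwd \<and> ?v \<in> W - Sc G ?u) \<or>
       (es ! (i - 1) \<noteq> Bwd \<and> es ! i = Fwd \<and> ?v \<in> W - Sc G ?w) \<or>
       (es ! (i - 1) = Bwd \<and> es ! i = Fwd \<and> ?v \<in> W - (Sc G ?u \<inter> Sc G ?w))"
      by blast
    with 3(1,2) show ?thesis unfolding sigma_blocked_def Let_def by blast
  qed
qed

lemma sigma_sep_hom:
  assumes hom: "mgraph_hom G H f"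
    and X: "\<And>v. v \<in> X \<Longrightarrow> f v \<in> X'" and Y: "\<And>v. v \<in> Y \<Longrightarrow> f v \<in> Y'"
    and W: "\<And>v. v \<in> verts G \<Longrightarrow> v \<in> W \<longleftrightarrow> f v \<in> W'"
    and sep: "sigma_sep H X' Y' W'"
  shows "sigma_sep G X Y W"
  unfolding sigma_sep_def
proof (intro allI impI, elim conjE)
  fix vs es
  assume walk: "is_walk G vs es" and "hd vs \<in> X" and "last vs \<in> Y"
  then have "vs \<noteq> []" and "set vs \<subseteq> verts G" unfolding is_walk_def by auto
  with \<open>hd vs \<in> X\<close> \<open>last vs \<in> Y\<close> have "hd (map f vs) \<in> X'" and "last (map f vs) \<in> Y'"
    using X Y by (auto simp: hd_map last_map)
  with sep is_walk_hom[OF hom walk] have "sigma_blocked H (map f vs) es W'"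
    unfolding sigma_sep_def by blast
  then show "sigma_blocked G vs es W"
    using sigma_blocked_hom[OF hom \<open>set vs \<subseteq> verts G\<close> \<open>vs \<noteq> []\<close> W] by blast
qed

definition cluster_of :: "'v set set \<Rightarrow> 'v \<Rightarrow> 'v set" where
  "cluster_of P v = (THE C. C \<in> P \<and> v \<in> C)"

lemma cluster_of_eq:
  assumes "is_partition P V" and "C \<in> P" and "v \<in> C"
  shows "cluster_of P v = C"
  unfolding cluster_of_def
proof (rule the_equality)
  show "\<And>D. D \<in> P \<and> v \<in> D \<Longrightarrow> D = C"
    using assms unfolding is_partition_def by blast
qed (use assms in blast)

lemma cluster_of_mem:
  assumes "is_partition P V" and "v \<in> V"
  shows "cluster_of P v \<in> P" and "v \<in> cluster_of P v"
proof -
  obtain C where "C \<in> P" "v \<in> C" using assms unfolding is_partition_def by blast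
  with cluster_of_eq[OF assms(1)] show "cluster_of P v \<in> P" and "v \<in> cluster_of P v" by simp_all
qed

lemma mem_Union_iff_cluster_of:
  assumes "is_partition P V" and "CS \<subseteq> P" and "v \<in> V"
  shows "v \<in> \<Union>CS \<longleftrightarrow> cluster_of P v \<in> CS"
  using cluster_of_eq[OF assms(1)] cluster_of_mem[OF assms(1,3)] assms(2) by blast

lemma compatible_cluster_of_hom:
  assumes "compatible G Gc"
  shows "mgraph_hom G Gc (cluster_of (verts Gc))"
proof -
  let ?cl = "cluster_of (verts Gc)"
  have part: "is_partition (verts Gc) (verts G)" and wf: "wf_mgraph G"
    and dir_Gc: "dir Gc = {(Ci, Cj). Ci \<in> verts Gc \<and> Cj \<in> verts Gc
                          \<and> (\<exists>a\<in>Ci. \<exists>b\<in>Cj. (a, b) \<in> dir G)}"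
    and bi_Gc: "bi Gc = {(Ci, Cj). Ci \<in> verts Gc \<and> Cj \<in> verts Gc
                          \<and> (\<exists>a\<in>Ci. \<exists>b\<in>Cj. (a, b) \<in> bi G)}"
    using assms unfolding compatible_def by simp_all
  have cl: "?cl v \<in> verts Gc" "v \<in> ?cl v" if "v \<in> verts G" for v
    using cluster_of_mem[OF part that] by auto
  have "(?cl a, ?cl b) \<in> dir Gc" if "(a, b) \<in> dir G" for a b
  proof -
    have "a \<in> verts G" "b \<in> verts G" using wf that unfolding wf_mgraph_def by auto
    with that show ?thesis unfolding dir_Gc using cl by auto
  qed
  moreover have "(?cl a, ?cl b) \<in> bi Gc" if "(a, b) \<in> bi G" for a b
  proof -
    have "a \<in> verts G" "b \<in> verts G" using wf that unfolding wf_mgraph_def by auto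
    with that show ?thesis unfolding bi_Gc using cl by auto
  qed
  ultimately show ?thesis using cl unfolding mgraph_hom_def by auto
qed

theorem theorem1:
  fixes Gc :: "'v set mgraph" and CX CY CW :: "'v set set"
  assumes "CX \<subseteq> verts Gc" and "CY \<subseteq> verts Gc" and "CW \<subseteq> verts Gc"
    and "CX \<inter> CY = {}" and "CX \<inter> CW = {}" and "CY \<inter> CW = {}"
    and "sigma_sep Gc CX CY CW"
  shows "\<forall>G :: 'v mgraph. compatible G Gc \<longrightarrow> sigma_sep G (\<Union>CX) (\<Union>CY) (\<Union>CW)"
proof (intro allI impI)
  fix G :: "'v mgraph"
  assume comp: "compatible G Gc"
  then have part: "is_partition (verts Gc) (verts G)" unfolding compatible_def by simp
  let ?cl = "cluster_of (verts Gc)"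
  have "\<Union>(verts Gc) = verts G" using part unfolding is_partition_def by simp
  then have in_verts: "v \<in> verts G" if "CS \<subseteq> verts Gc" and "v \<in> \<Union>CS" for CS v
    using that by blast
  show "sigma_sep G (\<Union>CX) (\<Union>CY) (\<Union>CW)"
  proof (rule sigma_sep_hom[OF compatible_cluster_of_hom[OF comp] _ _ _ assms(7)])
    show "?cl v \<in> CX" if "v \<in> \<Union>CX" for v
      using mem_Union_iff_cluster_of[OF part assms(1) in_verts[OF assms(1) that]] that by blast
    show "?cl v \<in> CY" if "v \<in> \<Union>CY" for v
      using mem_Union_iff_cluster_of[OF part assms(2) in_verts[OF assms(2) that]] that by blast
    show "v \<in> \<Union>CW \<longleftrightarrow> ?cl v \<in> CW" if "v \<in> verts G" for v
      using mem_Union_iff_cluster_of[OF part assms(3) that] .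
  qed
qed

end
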